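(* Let $U$ be a nonempty open subset of $\mathbb{R}^d$ and $(x_n)_{n\ge1}$ a sequence in $\mathbb{R}^d$. Assume that for $\mathcal{L}^d$-almost every $x\in U$ there exist $\alpha(x)>0$ and an integer $\underline{j}(x)\ge0$ such that $\#\mathrm{M}((x_n)_{n\ge1};\lambda_{j_0}(x),j)\ge\alpha(x)2^{dj}$ for all integers $j_0,j\ge\underline{j}(x)$. Then $(x_n)_{n\ge1}$ is uniformly eutaxic in $U$.
   Context: Fix a norm $|\cdot|$ on $\mathbb{R}^d$; $\mathcal{L}^d$ is Lebesgue measure. $\mathrm{P}_d$ is the set of real sequences $(r_n)_{n\ge1}$ with $r_{n+1}\le r_n$ for all $n$, $r_n\to0$ and $\sum_n r_n^d=\infty$. A sequence $(x_n)$ in $\mathbb{R}^d$ is uniformly eutaxic in $U$ if for every $(r_n)\in\mathrm{P}_d$, $\mathcal{L}^d$-almost every $x\in U$ satisfies $|x-x_n|<r_n$ for infinitely many $n$. A dyadic cube is a set $\lambda=2^{-j}(k+[0,1)^d)$ with $j\in\mathbb{Z}$, $k\in\mathbb{Z}^d$; its generation is $\langle\lambda\rangle=j$; $\lambda_j(x)$ is the unique dyadic cube of generation $j$ containing $x$. For a nonempty dyadic cube $\lambda$ and an integer $j\ge0$, $\mathrm{M}((x_n)_{n\ge1};\lambda,j)$ is the set of dyadic cubes $\lambda'\subseteq\lambda$ of generation $\langle\lambda\rangle+j$ such that $x_n\in\lambda'$ for some $n\le2^{d\langle\lambda'\rangle}$. *)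

theory Defs
  imports "HOL-Analysis.Analysis"
begin

text \<open>R^d is modelled as real^'n, with d = CARD('n).\<close>

definition is_norm :: "('a::real_vector \<Rightarrow> real) \<Rightarrow> bool" where
  "is_norm N \<longleftrightarrow> (\<forall>x. 0 \<le> N x) \<and> (\<forall>x. N x = 0 \<longleftrightarrow> x = 0)
     \<and> (\<forall>c x. N (scaleR c x) = \<bar>c\<bar> * N x) \<and> (\<forall>x y. N (x + y) \<le> N x + N y)"

text \<open>P_d: sequences indexed from 1 (the value at 0 is irrelevant).\<close>
definition P_seq :: "nat \<Rightarrow> (nat \<Rightarrow> real) \<Rightarrow> bool" where
  "P_seq d r \<longleftrightarrow> (\<forall>n\<ge>1. r (Suc n) \<le> r n) \<and> r \<longlonglongrightarrow> 0
     \<and> \<not> summable (\<lambda>n. r (Suc n) ^ d)"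

definition uniformly_eutaxic ::
  "(real^'n \<Rightarrow> real) \<Rightarrow> (nat \<Rightarrow> real^'n) \<Rightarrow> (real^'n) set \<Rightarrow> bool" where
  "uniformly_eutaxic N xs U \<longleftrightarrow>
     (\<forall>r. P_seq CARD('n) r \<longrightarrow>
        (AE x in lebesgue. x \<in> U \<longrightarrow> (\<exists>\<^sub>F n in sequentially. N (x - xs n) < r n)))"

definition dyadic_cube :: "int \<Rightarrow> int^'n \<Rightarrow> (real^'n) set" where
  "dyadic_cube j k = {x. \<forall>i. 2 powr (- real_of_int j) * of_int (k$i) \<le> x$i
                          \<and> x$i < 2 powr (- real_of_int j) * (of_int (k$i) + 1)}"

definition is_dyadic :: "(real^'n) set \<Rightarrow> bool" where
  "is_dyadic l \<longleftrightarrow> (\<exists>j k. l = dyadic_cube j k)"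

definition generation :: "(real^'n) set \<Rightarrow> int" where
  "generation l = (THE j. \<exists>k. l = dyadic_cube j k)"

definition cube_at :: "int \<Rightarrow> real^'n \<Rightarrow> (real^'n) set" where
  "cube_at j x = dyadic_cube j (\<chi> i. \<lfloor>2 powr (real_of_int j) * x$i\<rfloor>)"

definition Mset :: "(nat \<Rightarrow> real^'n) \<Rightarrow> (real^'n) set \<Rightarrow> nat \<Rightarrow> (real^'n) set set" where
  "Mset xs l j = {l'. is_dyadic l' \<and> l' \<subseteq> l \<and> generation l' = generation l + int j
      \<and> (\<exists>n\<ge>1. real n \<le> 2 powr (real CARD('n) * real_of_int (generation l')) \<and> xs n \<in> l')}"

end

theory Submission
  imports Defs
begin

text \<open>Fix \<open>r \<in> P_d\<close>. It suffices to show that, for all \<open>\<alpha> > 0\<close> and levels \<open>jl\<close>, \<open>K\<close>, the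
  set \<open>E\<close> of points which satisfy the hypothesis with the constants \<open>\<alpha>\<close>, \<open>jl\<close> but lie in no
  ball \<open>B(x_n, r_n)\<close> with \<open>n \<ge> K\<close> is null.
  In a dyadic cube \<open>\<lambda>\<close> of generation \<open>j0 \<ge> jl\<close> around a point of \<open>E\<close>, the hypothesis gives at
  every generation \<open>J\<close> about \<open>\<alpha> 2^(d (J - j0))\<close> subcubes containing a point \<open>x_n\<close> with
  \<open>n \<le> 2^(d J)\<close>. Around these points take the finer dyadic cubes that fit into the balls
  \<open>B(x_n, r_n)\<close>. Along a sparse arithmetic progression of generations these unions are almost
  independent, and \<open>\<Sum>J. (2^J r(2^(d J)))^d = \<infinity>\<close> by Cauchy condensation, so a Bonferroni
  estimate shows that they cover a fraction \<open>\<alpha>^2/64\<close> of \<open>\<lambda>\<close>. Thus \<open>E\<close> has relative measure at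
  most \<open>1 - \<alpha>^2/64\<close> in all these cubes, which by the density argument for dyadic cubes forces
  \<open>E\<close> to be null.\<close>

section \<open>Dyadic cubes\<close>

lemma mem_dyadic_cube_iff:
  "x \<in> dyadic_cube j k \<longleftrightarrow> (\<forall>i. \<lfloor>2 powr real_of_int j * x$i\<rfloor> = k$i)"
proof -
  have pos: "2 powr real_of_int j > 0" by simp
  have "2 powr (- real_of_int j) * of_int (k$i) \<le> x$i \<and> x$i < 2 powr (- real_of_int j) * (of_int (k$i) + 1)
     \<longleftrightarrow> \<lfloor>2 powr real_of_int j * x$i\<rfloor> = k$i" for i
    unfolding floor_eq_iff powr_minus using pos by (auto simp: field_simps)
  then show ?thesis unfolding dyadic_cube_def by auto
qed

lemma mem_cube_at_self: "x \<in> cube_at j x"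
  unfolding cube_at_def mem_dyadic_cube_iff by simp

lemma cube_at_eq_dyadic_cube: "x \<in> dyadic_cube j k \<Longrightarrow> cube_at j x = dyadic_cube j k"
  unfolding cube_at_def mem_dyadic_cube_iff by (metis (mono_tags, lifting) vec_eq_iff vec_lambda_beta)

lemma cube_at_eq_of_mem: "y \<in> cube_at j x \<Longrightarrow> cube_at j y = cube_at j x"
  unfolding cube_at_def[of j x] by (rule cube_at_eq_dyadic_cube)

lemma cube_at_disjoint: "cube_at j x \<noteq> cube_at j y \<Longrightarrow> cube_at j x \<inter> cube_at j y = {}"
  using cube_at_eq_of_mem by blast

lemma cube_at_antimono:
  assumes "j \<le> j'"
  shows "cube_at j' x \<subseteq> cube_at j x"
proof
  fix y assume y: "y \<in> cube_at j' x"
  define m where "m = nat (j' - j)"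
  have scale: "2 powr real_of_int j' = 2 powr real_of_int j * 2 ^ m"
    using assms by (simp add: m_def powr_realpow[symmetric] powr_add[symmetric])
  have "\<lfloor>2 powr real_of_int j * z\<rfloor> = \<lfloor>2 powr real_of_int j' * z\<rfloor> div 2 ^ m" for z :: real
    using floor_divide_real_eq_div[of "2 ^ m" "2 powr real_of_int j' * z"] by (simp add: scale)
  then show "y \<in> cube_at j x"
    using y unfolding cube_at_def mem_dyadic_cube_iff by simp
qed

lemma cube_at_subset_of_mem:
  assumes "z \<in> cube_at j a" "z \<in> cube_at j' b" "j \<le> j'"
  shows "cube_at j' b \<subseteq> cube_at j a"
  using cube_at_eq_of_mem[OF assms(1)] cube_at_eq_of_mem[OF assms(2)] cube_at_antimono[OF assms(3), of z]
  by simp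

lemma abs_component_diff_lt_cube_at:
  assumes "y \<in> cube_at (int m) x"
  shows "\<bar>y$i - x$i\<bar> < 1 / 2^m"
proof -
  have "\<lfloor>2^m * y$i\<rfloor> = \<lfloor>2^m * x$i\<rfloor>"
    using assms unfolding cube_at_def mem_dyadic_cube_iff by (simp add: powr_realpow)
  then have "\<bar>2^m * y$i - 2^m * x$i\<bar> < 1" by linarith
  then have "2^m * \<bar>y$i - x$i\<bar> < 1" by (simp add: abs_mult right_diff_distrib[symmetric])
  then show ?thesis by (simp add: field_simps)
qed

lemma eventually_cube_at_subset_ball:
  fixes x :: "real^'n"
  assumes "\<delta> > 0"
  shows "eventually (\<lambda>J. cube_at (int J) x \<subseteq> ball x \<delta>) sequentially"
proof -
  obtain J0 where J0: "(1/2::real)^J0 < \<delta> / CARD('n)"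
    using real_arch_pow_inv[of "\<delta> / CARD('n)" "1/2"] assms by auto
  have "y \<in> ball x \<delta>" if J: "J \<ge> J0" and y: "y \<in> cube_at (int J) x" for J y
  proof -
    have "dist x y \<le> (\<Sum>i\<in>UNIV. \<bar>(y - x)$i\<bar>)"
      using norm_le_l1_cart[of "y - x"] by (simp add: dist_norm norm_minus_commute)
    also have "\<dots> < CARD('n) * (1/2)^J"
      using sum_strict_mono[of UNIV "\<lambda>i. \<bar>(y - x)$i\<bar>" "\<lambda>_. 1/2^J"] abs_component_diff_lt_cube_at[OF y]
      by (simp add: power_one_over)
    also have "\<dots> \<le> CARD('n) * (1/2)^J0" by (intro mult_left_mono power_decreasing J) auto
    also have "\<dots> < \<delta>" using J0 by (simp add: field_simps)
    finally show ?thesis by simp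
  qed
  then show ?thesis unfolding eventually_sequentially by blast
qed

lemma dyadic_cube_between_boxes:
  fixes j :: int and k :: "int^'n"
  defines "a \<equiv> \<chi> i. of_int (k$i) / 2 powr real_of_int j"
    and "b \<equiv> \<chi> i. (of_int (k$i) + 1) / 2 powr real_of_int j"
  shows "box a b \<subseteq> dyadic_cube j k" "dyadic_cube j k \<subseteq> cbox a b"
  unfolding dyadic_cube_def a_def b_def
  by (auto simp: mem_box_cart powr_minus divide_inverse mult.commute less_imp_le)

lemma dyadic_cube_lmeasurable: "(dyadic_cube j k :: (real^'n) set) \<in> lmeasurable"
proof (rule fmeasurableI2[OF lmeasurable_cbox dyadic_cube_between_boxes(2)])
  have "dyadic_cube j k \<in> sets (borel :: (real^'n) measure)"
    unfolding dyadic_cube_def by measurable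
  then show "dyadic_cube j k \<in> sets lebesgue" by simp
qed

lemma measure_dyadic_cube:
  "measure lebesgue (dyadic_cube j k :: (real^'n) set) = (1 / 2 powr real_of_int j) ^ CARD('n)"
proof -
  define a :: "real^'n" where "a = (\<chi> i. of_int (k$i) / 2 powr real_of_int j)"
  define b :: "real^'n" where "b = (\<chi> i. (of_int (k$i) + 1) / 2 powr real_of_int j)"
  note boxes = dyadic_cube_between_boxes[where j=j and k=k, folded a_def b_def]
  have "measure lebesgue (box a b) \<le> measure lebesgue (dyadic_cube j k)"
    by (intro measure_mono_fmeasurable boxes dyadic_cube_lmeasurable) simp
  moreover have "measure lebesgue (dyadic_cube j k) \<le> measure lebesgue (cbox a b)"
    by (intro measure_mono_fmeasurable boxes fmeasurableD dyadic_cube_lmeasurable) simp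
  moreover have "measure lebesgue (box a b) = measure lebesgue (cbox a b)"
    by (metis box_borel cbox_borel sets_lborel measure_completion
        measure_lborel_box_eq measure_lborel_cbox_eq)
  moreover have "a \<in> cbox a b"
    by (auto simp: mem_box_cart a_def b_def divide_right_mono)
  then have "measure lebesgue (cbox a b) = (\<Prod>i\<in>UNIV. b$i - a$i)"
    using content_cbox_cart[of a b] by (metis cbox_borel sets_lborel measure_completion empty_iff)
  ultimately show ?thesis
    by (simp add: a_def b_def diff_divide_distrib[symmetric])
qed

lemma generation_dyadic_cube: "generation (dyadic_cube j k :: (real^'n) set) = j"
proof -
  have "j' = j" if "dyadic_cube j' k' = (dyadic_cube j k :: (real^'n) set)" for j' k'
  proof -
    have "(1 / 2 powr real_of_int j') ^ CARD('n) = (1 / 2 powr real_of_int j) ^ CARD('n)"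
      using measure_dyadic_cube[of j' k'] measure_dyadic_cube[of j k] that by (metis (no_types))
    then have "2 powr real_of_int j' = 2 powr real_of_int j"
      by (simp add: power_eq_iff_eq_base)
    then show ?thesis by (simp add: powr_inj)
  qed
  then show ?thesis unfolding generation_def by blast
qed

lemma generation_cube_at: "generation (cube_at j x) = j"
  unfolding cube_at_def by (rule generation_dyadic_cube)

lemma cube_at_lmeasurable: "cube_at j (x::real^'n) \<in> lmeasurable"
  unfolding cube_at_def by (rule dyadic_cube_lmeasurable)

lemma measure_cube_at:
  "measure lebesgue (cube_at (int J) (x::real^'n)) = (1/2) ^ (CARD('n) * J)"
  unfolding cube_at_def measure_dyadic_cube
  by (simp add: powr_realpow power_mult power_one_over mult.commute)

lemma sets_lebesgue_cube_at_pred: "{x::real^'n. Pr (cube_at j x)} \<in> sets lebesgue"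
proof -
  have eq: "{x::real^'n. Pr (cube_at j x)} = (\<Union>k\<in>{k. Pr (dyadic_cube j k)}. dyadic_cube j k)"
    using mem_cube_at_self cube_at_eq_dyadic_cube unfolding cube_at_def by fastforce
  show ?thesis
    unfolding eq by (intro sets.countable_UN') (auto intro: fmeasurableD dyadic_cube_lmeasurable)
qed

section \<open>Counting disjoint cubes by measure\<close>

lemma finite_disjoint_family_card_mult_le_measure:
  fixes F :: "'a set set"
  assumes Q: "\<And>Q. Q \<in> F \<Longrightarrow> Q \<in> fmeasurable M \<and> measure M Q = \<delta> \<and> Q \<subseteq> S"
    and dis: "pairwise disjnt F" and S: "S \<in> fmeasurable M" and \<delta>: "\<delta> > 0"
  shows "finite F \<and> real (card F) * \<delta> \<le> measure M S"
proof -
  have bound: "real (card G) * \<delta> \<le> measure M S" if "G \<subseteq> F" "finite G" for G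
  proof -
    have "(\<Sum>Q\<in>G. measure M Q) = (\<Sum>Q\<in>G. \<delta>)"
      using Q that by (intro sum.cong) auto
    then have "real (card G) * \<delta> = (\<Sum>Q\<in>G. measure M Q)" by simp
    also have "\<dots> = measure M (\<Union>G)"
      using Q that(1) pairwise_subset[OF dis that(1)] by (intro measure_Union'[symmetric] that(2)) blast+
    also have "\<dots> \<le> measure M S"
      using Q that by (intro measure_mono_fmeasurable[OF _ _ S] sets.finite_Union) (auto dest: fmeasurableD)
    finally show ?thesis .
  qed
  have "finite F"
  proof (rule ccontr)
    assume "infinite F"
    then obtain G where G: "finite G" "G \<subseteq> F" "card G = nat \<lceil>measure M S / \<delta>\<rceil> + 1"
      using infinite_arbitrarily_large by blast
    have "measure M S / \<delta> < real (card G)" using G(3) by linarith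
    then have "measure M S < real (card G) * \<delta>" using \<delta> by (simp add: field_simps)
    with bound[OF G(2,1)] show False by simp
  qed
  with bound show ?thesis by blast
qed

lemma measure_UN_ge_sum_minus_pairwise:
  fixes A :: "nat \<Rightarrow> 'a set" and k :: nat
  assumes "\<And>i. i < k \<Longrightarrow> A i \<in> fmeasurable M"
  shows "measure M (\<Union>i<k. A i) \<ge> (\<Sum>i<k. measure M (A i)) - (\<Sum>i<k. \<Sum>i'<i. measure M (A i' \<inter> A i))"
  using assms
proof (induction k)
  case (Suc k)
  define U where "U = (\<Union>i<k. A i)"
  have U: "U \<in> fmeasurable M" unfolding U_def using Suc.prems by (intro fmeasurable.finite_UN) auto
  have Ak: "A k \<in> fmeasurable M" using Suc.prems by simp
  have "measure M (\<Union>i'<k. A i' \<inter> A k) \<le> (\<Sum>i'<k. measure M (A i' \<inter> A k))"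
    using Suc.prems by (intro measure_UNION_le) (auto intro: sets.Int fmeasurableD)
  moreover have "U \<inter> A k = (\<Union>i'<k. A i' \<inter> A k)" unfolding U_def by auto
  ultimately have "measure M (U \<inter> A k) \<le> (\<Sum>i'<k. measure M (A i' \<inter> A k))" by simp
  moreover have "measure M (U \<union> A k) = measure M U + measure M (A k) - measure M (U \<inter> A k)"
    by (rule measure_Un3[OF U Ak])
  moreover have "(\<Union>i<Suc k. A i) = U \<union> A k" unfolding U_def lessThan_Suc by auto
  ultimately show ?case using Suc unfolding U_def by simp
qed simp

lemma measure_add_le_of_disjoint_subsets:
  assumes "A \<in> fmeasurable M" "B \<in> fmeasurable M" "Q \<in> fmeasurable M"
    and "A \<inter> B = {}" "A \<subseteq> Q" "B \<subseteq> Q"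
  shows "measure M A + measure M B \<le> measure M Q"
proof -
  have "measure M A + measure M B = measure M (A \<union> B)"
    using measure_Un3[OF assms(1,2)] assms(4) by simp
  also have "\<dots> \<le> measure M Q"
    using assms by (intro measure_mono_fmeasurable sets.Un fmeasurableD) auto
  finally show ?thesis .
qed

lemma card_mult_measure_cube_at_le:
  fixes P :: "(real^'n) set"
  assumes inj: "inj_on (cube_at (int J)) P" and sub: "\<And>p. p \<in> P \<Longrightarrow> cube_at (int J) p \<subseteq> S"
    and S: "S \<in> lmeasurable"
  shows "finite P \<and> real (card P) * (1/2) ^ (CARD('n) * J) \<le> measure lebesgue S"
proof -
  have "finite (cube_at (int J) ` P) \<and>
      real (card (cube_at (int J) ` P)) * (1/2) ^ (CARD('n) * J) \<le> measure lebesgue S"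
  proof (rule finite_disjoint_family_card_mult_le_measure[OF _ _ S])
    show "pairwise disjnt (cube_at (int J) ` P)"
      unfolding pairwise_def disjnt_def using cube_at_disjoint by blast
  qed (use sub measure_cube_at cube_at_lmeasurable in auto)
  then show ?thesis using inj by (simp add: card_image finite_image_iff)
qed

lemma measure_UN_cube_at:
  fixes P :: "(real^'n) set"
  assumes "finite P" "inj_on (cube_at (int J)) P" "J \<le> m"
  shows "measure lebesgue (\<Union>p\<in>P. cube_at (int m) p) = real (card P) * (1/2) ^ (CARD('n) * m)"
proof -
  have "disjnt (cube_at (int m) p) (cube_at (int m) q)" if "p \<in> P" "q \<in> P" "p \<noteq> q" for p q
  proof -
    have "cube_at (int J) p \<noteq> cube_at (int J) q" using that assms(2) by (auto dest: inj_onD)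
    then have "cube_at (int J) p \<inter> cube_at (int J) q = {}" by (rule cube_at_disjoint)
    moreover have "cube_at (int m) p \<subseteq> cube_at (int J) p" "cube_at (int m) q \<subseteq> cube_at (int J) q"
      using assms(3) by (auto intro!: cube_at_antimono)
    ultimately show ?thesis unfolding disjnt_def by blast
  qed
  then have "measure lebesgue (\<Union>p\<in>P. cube_at (int m) p) = (\<Sum>p\<in>P. measure lebesgue (cube_at (int m) p))"
    by (intro measure_UNION' pairwiseI assms(1) cube_at_lmeasurable)
  then show ?thesis by (simp add: measure_cube_at)
qed

lemma UN_cube_at_lmeasurable: "finite P \<Longrightarrow> (\<Union>p\<in>P. cube_at j (p::real^'n)) \<in> lmeasurable"
  by (intro fmeasurable.finite_UN cube_at_lmeasurable)

lemma card_cubes_meeting_cube_at_le: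
  fixes P' :: "(real^'n) set" and p :: "real^'n" and m :: nat
  assumes fin: "finite P'" and inj: "inj_on (cube_at (int J')) P'"
  defines "S \<equiv> {p'\<in>P'. cube_at (int m) p \<inter> cube_at (int J') p' \<noteq> {}}"
  shows "real (card S) * (1/2) ^ (CARD('n) * J') \<le> (1/2) ^ (CARD('n) * m) + (1/2) ^ (CARD('n) * J')"
proof (cases "m \<le> J'")
  case True
  have "cube_at (int J') p' \<subseteq> cube_at (int m) p" if pS: "p' \<in> S" for p'
  proof -
    obtain z where "z \<in> cube_at (int m) p" "z \<in> cube_at (int J') p'" using pS unfolding S_def by blast
    then show ?thesis by (rule cube_at_subset_of_mem) (use True in simp)
  qed
  moreover have "inj_on (cube_at (int J')) S" using inj by (rule inj_on_subset) (auto simp: S_def)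
  ultimately have "real (card S) * (1/2) ^ (CARD('n) * J') \<le> measure lebesgue (cube_at (int m) p)"
    using card_mult_measure_cube_at_le cube_at_lmeasurable by blast
  moreover have "(0::real) \<le> (1/2) ^ (CARD('n) * J')" by simp
  ultimately show ?thesis unfolding measure_cube_at by linarith
next
  case False
  have same: "cube_at (int J') p' = cube_at (int J') p" if pS: "p' \<in> S" for p'
  proof -
    obtain z where z: "z \<in> cube_at (int m) p" "z \<in> cube_at (int J') p'" using pS unfolding S_def by blast
    have "cube_at (int m) p \<subseteq> cube_at (int J') p'"
      by (rule cube_at_subset_of_mem[OF z(2,1)]) (use False in simp)
    then show ?thesis using mem_cube_at_self cube_at_eq_of_mem by blast
  qed
  have "finite S" using fin by (simp add: S_def)
  moreover have "a = b" if "a \<in> S" "b \<in> S" for a b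
    using that same[OF that(1)] same[OF that(2)] inj unfolding S_def by (metis (no_types, lifting) inj_onD mem_Collect_eq)
  ultimately have "card S \<le> Suc 0"
    using card_le_Suc0_iff_eq by blast
  then have "real (card S) * (1/2) ^ (CARD('n) * J') \<le> 1 * (1/2) ^ (CARD('n) * J')"
    by (intro mult_right_mono) auto
  moreover have "(0::real) \<le> (1/2) ^ (CARD('n) * m)" by simp
  ultimately show ?thesis by linarith
qed

lemma measure_Int_cube_at_UN_le:
  fixes P' :: "(real^'n) set"
  assumes fin: "finite P'" and inj: "inj_on (cube_at (int J')) P'" and "J' \<le> m'"
  shows "measure lebesgue (cube_at (int m) p \<inter> (\<Union>p'\<in>P'. cube_at (int m') p'))
    \<le> ((1/2) ^ (CARD('n) * m) + (1/2) ^ (CARD('n) * J')) * (1/2) ^ (CARD('n) * (m' - J'))"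
proof -
  define S where "S = {p'\<in>P'. cube_at (int m) p \<inter> cube_at (int J') p' \<noteq> {}}"
  have "cube_at (int m) p \<inter> (\<Union>p'\<in>P'. cube_at (int m') p') \<subseteq> (\<Union>p'\<in>S. cube_at (int m') p')"
    using cube_at_antimono[of "int J'" "int m'"] assms(3) unfolding S_def by fastforce
  then have "measure lebesgue (cube_at (int m) p \<inter> (\<Union>p'\<in>P'. cube_at (int m') p'))
      \<le> measure lebesgue (\<Union>p'\<in>S. cube_at (int m') p')"
    using fin by (intro measure_mono_fmeasurable fmeasurable.finite_UN sets.Int fmeasurableD
        cube_at_lmeasurable sets.finite_UN) (auto simp: S_def)
  also have "\<dots> \<le> (\<Sum>p'\<in>S. measure lebesgue (cube_at (int m') p'))"
    using fin by (intro measure_UNION_le) (auto simp: S_def intro: fmeasurableD cube_at_lmeasurable)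
  also have "\<dots> = real (card S) * (1/2) ^ (CARD('n) * J') * (1/2) ^ (CARD('n) * (m' - J'))"
    using assms(3) by (simp add: measure_cube_at power_add[symmetric] add_mult_distrib2[symmetric])
  also have "\<dots> \<le> ((1/2) ^ (CARD('n) * m) + (1/2) ^ (CARD('n) * J')) * (1/2) ^ (CARD('n) * (m' - J'))"
    using card_cubes_meeting_cube_at_le[OF fin inj, where m=m and p=p] by (intro mult_right_mono) (simp_all add: S_def)
  finally show ?thesis .
qed

lemma measure_Int_UN_cube_at_le:
  fixes P P' :: "(real^'n) set"
  assumes "finite P" "finite P'" "inj_on (cube_at (int J')) P'" "J' \<le> m'"
  shows "measure lebesgue ((\<Union>p\<in>P. cube_at (int m) p) \<inter> (\<Union>p'\<in>P'. cube_at (int m') p'))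
    \<le> real (card P) * ((1/2) ^ (CARD('n) * m) + (1/2) ^ (CARD('n) * J')) * (1/2) ^ (CARD('n) * (m' - J'))"
proof -
  let ?A' = "\<Union>p'\<in>P'. cube_at (int m') p'"
  have A': "?A' \<in> sets lebesgue"
    using assms(2) by (intro fmeasurableD UN_cube_at_lmeasurable)
  have "(\<Union>p\<in>P. cube_at (int m) p) \<inter> ?A' = (\<Union>p\<in>P. cube_at (int m) p \<inter> ?A')" by blast
  then have "measure lebesgue ((\<Union>p\<in>P. cube_at (int m) p) \<inter> ?A')
      \<le> (\<Sum>p\<in>P. measure lebesgue (cube_at (int m) p \<inter> ?A'))"
    using measure_UNION_le[OF assms(1), of "\<lambda>p. cube_at (int m) p \<inter> ?A'" lebesgue]
      sets.Int[OF fmeasurableD[OF cube_at_lmeasurable] A'] by simp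
  also have "\<dots> \<le> (\<Sum>p\<in>P. ((1/2) ^ (CARD('n) * m) + (1/2) ^ (CARD('n) * J')) * (1/2) ^ (CARD('n) * (m' - J')))"
    using measure_Int_cube_at_UN_le[OF assms(2-4)] by (intro sum_mono) blast
  finally show ?thesis by simp
qed

section \<open>Elementary estimates for real sequences\<close>

lemma sum_power_diff_le:
  fixes x :: real
  assumes "0 \<le> x" "x \<le> 1/2"
  shows "(\<Sum>i'<i. x ^ (i - i')) \<le> 2 * x"
proof (induction i)
  case (Suc i)
  have "(\<Sum>i'<Suc i. x ^ (Suc i - i')) = x + x * (\<Sum>i'<i. x ^ (i - i'))"
    by (simp add: lessThan_Suc sum_distrib_left Suc_diff_le)
  also have "\<dots> \<le> x + x * (2 * x)"
    using Suc assms by (intro add_left_mono mult_left_mono) auto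
  also have "\<dots> \<le> 2 * x"
    using assms mult_left_mono[of "2 * x" 1 x] by linarith
  finally show ?case .
qed (use assms in simp)

lemma sum_minus_pairwise_lower_bound:
  fixes t a :: "nat \<Rightarrow> real" and pr :: "nat \<Rightarrow> nat \<Rightarrow> real" and V \<alpha> x :: real and k :: nat
  assumes t: "\<And>i. i < k \<Longrightarrow> 0 \<le> t i"
    and a: "\<And>i. i < k \<Longrightarrow> (\<alpha>/2) * V * t i \<le> a i"
    and pr: "\<And>i i'. i < k \<Longrightarrow> i' < i \<Longrightarrow> pr i' i \<le> V * (t i' * t i + x ^ (i - i') * t i)"
    and x: "0 \<le> x" "x \<le> 1/2" "2 * x \<le> \<alpha>/8"
    and T: "\<alpha>/8 \<le> (\<Sum>i<k. t i)" "(\<Sum>i<k. t i) \<le> \<alpha>/4"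
    and V: "V \<ge> 0"
  shows "V * (\<alpha>^2/64) \<le> (\<Sum>i<k. a i) - (\<Sum>i<k. \<Sum>i'<i. pr i' i)"
proof -
  define T where "T = (\<Sum>i<k. t i)"
  have "(\<Sum>i'<i. pr i' i) \<le> V * (t i * T + t i * (2 * x))" if i: "i < k" for i
  proof -
    have "(\<Sum>i'<i. pr i' i) \<le> (\<Sum>i'<i. V * (t i' * t i + x ^ (i - i') * t i))"
      using pr i by (intro sum_mono) auto
    also have "\<dots> = V * (t i * (\<Sum>i'<i. t i') + t i * (\<Sum>i'<i. x ^ (i - i')))"
      by (simp add: sum_distrib_left sum.distrib algebra_simps)
    also have "\<dots> \<le> V * (t i * T + t i * (2 * x))"
    proof -
      have "(\<Sum>i'<i. t i') \<le> T" unfolding T_def using i t by (intro sum_mono2) auto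
      then show ?thesis
        using sum_power_diff_le[OF x(1,2), of i] t[OF i] V by (intro mult_left_mono add_mono) auto
    qed
    finally show ?thesis .
  qed
  then have "(\<Sum>i<k. \<Sum>i'<i. pr i' i) \<le> (\<Sum>i<k. V * (t i * T + t i * (2 * x)))"
    by (intro sum_mono) auto
  also have "\<dots> = V * (T * T + T * (2 * x))"
    unfolding T_def by (simp add: sum_distrib_left sum_distrib_right sum.distrib algebra_simps)
  finally have pairs: "(\<Sum>i<k. \<Sum>i'<i. pr i' i) \<le> V * (T * T + T * (2 * x))" .
  have singles: "(\<alpha>/2) * V * T \<le> (\<Sum>i<k. a i)"
    unfolding T_def sum_distrib_left using a by (intro sum_mono) auto
  have "(\<alpha>/8) * (\<alpha>/8) \<le> T * (\<alpha>/2 - T - 2 * x)"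
    using T x unfolding T_def[symmetric] by (intro mult_mono) auto
  then have "V * ((\<alpha>/8) * (\<alpha>/8)) \<le> V * (T * (\<alpha>/2 - T - 2 * x))"
    using V by (rule mult_left_mono)
  moreover have "(\<alpha>/8) * (\<alpha>/8) = \<alpha>^2/64" by (simp add: power2_eq_square)
  ultimately have "V * (\<alpha>^2/64) \<le> V * (T * (\<alpha>/2 - T - 2 * x))" by simp
  then show ?thesis using pairs singles by (simp add: algebra_simps)
qed

lemma exists_partial_sum_between:
  fixes w :: "nat \<Rightarrow> real"
  assumes ns: "\<not> summable w" and w: "\<And>i. 0 \<le> w i" "\<And>i. w i \<le> c" and c: "c > 0"
  obtains k where "c \<le> (\<Sum>i<k. w i)" "(\<Sum>i<k. w i) \<le> 2 * c"
proof -
  have ex: "\<exists>k. c \<le> (\<Sum>i<k. w i)"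
  proof (rule ccontr)
    assume "\<nexists>k. c \<le> (\<Sum>i<k. w i)"
    then have "summable w" using w(1) by (intro summableI_nonneg_bounded[of w c]) (auto simp: not_le less_imp_le)
    with ns show False by simp
  qed
  define k where "k = (LEAST k. c \<le> (\<Sum>i<k. w i))"
  have k: "c \<le> (\<Sum>i<k. w i)" unfolding k_def by (rule LeastI_ex[OF ex])
  then obtain k' where k': "k = Suc k'" using c by (cases k) auto
  have "\<not> c \<le> (\<Sum>i<k'. w i)"
    using not_less_Least[of k' "\<lambda>k. c \<le> (\<Sum>i<k. w i)"] k' unfolding k_def by simp
  then have "(\<Sum>i<k. w i) \<le> 2 * c" using w(2)[of k'] unfolding k' by simp
  with k that show ?thesis by blast
qed

lemma summable_comp_div:
  fixes v :: "nat \<Rightarrow> real"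
  assumes v: "summable v" "\<And>n. 0 \<le> v n" and g: "g > 0"
  shows "summable (\<lambda>n. v (n div g))"
proof -
  have blocks: "(\<Sum>n<g * M. v (n div g)) = g * (\<Sum>J<M. v J)" for M
  proof (induction M)
    case (Suc M)
    have "(\<Sum>n\<in>{g*M..<g*M+g}. v (n div g)) = (\<Sum>n\<in>{g*M..<g*M+g}. v M)"
      using g by (intro sum.cong refl arg_cong[of _ _ v] div_nat_eqI) auto
    moreover have split: "{..<g * Suc M} = {..<g*M} \<union> {g*M..<g*M+g}" by auto
    ultimately have "(\<Sum>n<g * Suc M. v (n div g)) = (\<Sum>n<g*M. v (n div g)) + g * v M"
      unfolding split by (subst sum.union_disjoint) auto
    then show ?case using Suc by (simp add: algebra_simps)
  qed simp
  show ?thesis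
  proof (rule summableI_nonneg_bounded)
    fix N
    have "(\<Sum>n<N. v (n div g)) \<le> (\<Sum>n<g*N. v (n div g))"
      using g v(2) by (intro sum_mono2) auto
    also have "\<dots> \<le> g * suminf v"
      unfolding blocks using v by (intro mult_left_mono sum_le_suminf) auto
    finally show "(\<Sum>n<N. v (n div g)) \<le> g * suminf v" .
  qed (use v in auto)
qed

lemma not_summable_min_cmult:
  fixes v :: "nat \<Rightarrow> real"
  assumes "\<not> summable v" "c1 > 0" "c2 > 0"
  shows "\<not> summable (\<lambda>i. min c1 (c2 * v i))"
proof
  assume s: "summable (\<lambda>i. min c1 (c2 * v i))"
  have "eventually (\<lambda>i. min c1 (c2 * v i) < c1) sequentially"
    using summable_LIMSEQ_zero[OF s] assms(2) by (rule order_tendstoD)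
  then have "eventually (\<lambda>i. min c1 (c2 * v i) = c2 * v i) sequentially"
    by (rule eventually_mono) (simp add: min_def split: if_splits)
  then have "summable (\<lambda>i. min c1 (c2 * v i)) = summable (\<lambda>i. c2 * v i)" by (rule summable_cong)
  then have "summable (\<lambda>i. c2 * v i)" using s by simp
  then show False using assms by (simp add: summable_cmult_iff)
qed

section \<open>Radius sequences in \<open>P\<^sub>d\<close>\<close>

context
  fixes d :: nat and r :: "nat \<Rightarrow> real"
  assumes d: "d \<ge> 1" and P: "P_seq d r"
begin

lemma P_seq_antimono:
  assumes "1 \<le> a" "a \<le> b"
  shows "r b \<le> r a"
  using assms(2)
proof (induction b rule: dec_induct)
  case (step n)
  have "r (Suc n) \<le> r n" using P step assms(1) unfolding P_seq_def by auto
  with step show ?case by simp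
qed simp

lemma P_seq_nonneg: "1 \<le> n \<Longrightarrow> 0 \<le> r n"
proof -
  assume n: "1 \<le> n"
  have "r \<longlonglongrightarrow> 0" using P unfolding P_seq_def by simp
  moreover have "\<forall>m\<ge>n. r m \<le> r n" using P_seq_antimono n by blast
  ultimately show "0 \<le> r n" by (intro LIMSEQ_le_const2) auto
qed

lemma P_seq_pos: "1 \<le> n \<Longrightarrow> 0 < r n"
proof (rule ccontr)
  assume n: "1 \<le> n" and "\<not> 0 < r n"
  then have "r m = 0" if "n \<le> m" for m
    using P_seq_antimono[OF n that] P_seq_nonneg[of m] n that by fastforce
  then have "eventually (\<lambda>m. r (Suc m) ^ d = 0) sequentially"
    using d by (intro eventually_sequentiallyI[of n]) auto
  then have "summable (\<lambda>m. r (Suc m) ^ d)" using summable_cong[of _ "\<lambda>_. 0::real"] by simp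
  with P show False unfolding P_seq_def by simp
qed

definition dyadic_radius :: "nat \<Rightarrow> real" where
  "dyadic_radius J = r (2 ^ (d * J))"

text \<open>Up to constant factors, the volume of \<open>2^(d J)\<close> balls of radius \<open>r(2^(d J))\<close>.\<close>
definition dyadic_volume :: "nat \<Rightarrow> real" where
  "dyadic_volume J = (2 ^ J * dyadic_radius J) ^ d"

lemma dyadic_radius_pos: "0 < dyadic_radius J"
  unfolding dyadic_radius_def by (rule P_seq_pos) simp

lemma dyadic_radius_antimono: "J \<le> J' \<Longrightarrow> dyadic_radius J' \<le> dyadic_radius J"
  unfolding dyadic_radius_def by (rule P_seq_antimono) (auto intro: power_increasing)

lemma dyadic_volume_nonneg: "0 \<le> dyadic_volume J"
  unfolding dyadic_volume_def using dyadic_radius_pos[of J] by simp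

lemma condensed_term_le_dyadic_volume: "2 ^ n * r (2 ^ n) ^ d \<le> 2 ^ d * dyadic_volume (n div d)"
proof -
  define J where "J = n div d"
  have "n = d * J + n mod d" unfolding J_def by simp
  then have J: "d * J \<le> n" "n \<le> d * J + d" using mod_less_divisor[of d n] d by linarith+
  have "r (2 ^ n) \<le> dyadic_radius J"
    unfolding dyadic_radius_def using J(1) by (intro P_seq_antimono power_increasing) auto
  then have "r (2 ^ n) ^ d \<le> dyadic_radius J ^ d"
    using P_seq_nonneg[of "2 ^ n"] by (intro power_mono) auto
  moreover have "(2::real) ^ n \<le> 2 ^ d * 2 ^ (d * J)"
    using J(2) by (simp add: power_add[symmetric] add.commute)
  ultimately have "2 ^ n * r (2 ^ n) ^ d \<le> 2 ^ d * 2 ^ (d * J) * dyadic_radius J ^ d"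
    using P_seq_nonneg[of "2 ^ n"] by (intro mult_mono) auto
  also have "\<dots> = 2 ^ d * dyadic_volume J"
    unfolding dyadic_volume_def by (simp add: power_mult_distrib power_mult mult.commute)
  finally show ?thesis unfolding J_def .
qed

lemma not_summable_dyadic_volume: "\<not> summable dyadic_volume"
proof
  define f where "f n = (if n = 0 then 0 else r n ^ d)" for n
  have f: "f (Suc m) \<le> f m" if "0 < m" for m
    unfolding f_def using that P_seq_antimono[of m "Suc m"] P_seq_nonneg[of "Suc m"] by (auto intro: power_mono)
  have "\<not> summable (\<lambda>n. r (Suc n) ^ d)" using P unfolding P_seq_def by simp
  then have "\<not> summable f" unfolding f_def by (subst summable_Suc_iff[symmetric]) simp
  moreover have "0 \<le> f n" for n unfolding f_def using P_seq_nonneg by simp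
  ultimately have "\<not> summable (\<lambda>n. 2 ^ n * f (2 ^ n))"
    using condensation_test[of f, OF f] by blast
  moreover assume "summable dyadic_volume"
  then have "summable (\<lambda>n. 2 ^ d * dyadic_volume (n div d))"
    using summable_comp_div dyadic_volume_nonneg d by (intro summable_mult) auto
  then have "summable (\<lambda>n. 2 ^ n * f (2 ^ n))"
  proof (rule summable_comparison_test'[of _ 0])
    show "norm (2 ^ n * f (2 ^ n)) \<le> 2 ^ d * dyadic_volume (n div d)" for n
      using condensed_term_le_dyadic_volume[of n] P_seq_nonneg[of "2 ^ n"] by (simp add: f_def)
  qed
  ultimately show False by simp
qed

lemma not_summable_dyadic_volume_progression:
  assumes g: "g > 0"
  shows "\<not> summable (\<lambda>i. dyadic_volume (J1 + g * i))"
proof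
  assume sv: "summable (\<lambda>i. dyadic_volume (J1 + g * i))"
  have bound: "dyadic_volume (J1 + n) \<le> (2 ^ g) ^ d * dyadic_volume (J1 + g * (n div g))" for n
  proof -
    define J where "J = J1 + g * (n div g)"
    have "n = g * (n div g) + n mod g" by simp
    then have J: "J \<le> J1 + n" "J1 + n \<le> J + g" using mod_less_divisor[OF g, of n] unfolding J_def by linarith+
    have "(2::real) ^ (J1 + n) \<le> 2 ^ g * 2 ^ J" using J(2) by (simp add: power_add[symmetric] add.commute)
    then have "2 ^ (J1 + n) * dyadic_radius (J1 + n) \<le> 2 ^ g * 2 ^ J * dyadic_radius J"
      using dyadic_radius_antimono[OF J(1)] dyadic_radius_pos[of "J1 + n"] by (intro mult_mono) auto
    then have "(2 ^ (J1 + n) * dyadic_radius (J1 + n)) ^ d \<le> (2 ^ g * 2 ^ J * dyadic_radius J) ^ d"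
      using dyadic_radius_pos[of "J1 + n"] by (intro power_mono) auto
    then show ?thesis unfolding dyadic_volume_def J_def by (simp only: power_mult_distrib mult.assoc)
  qed
  have "summable (\<lambda>n. (2 ^ g) ^ d * dyadic_volume (J1 + g * (n div g)))"
    using summable_comp_div[OF sv _ g] dyadic_volume_nonneg by (intro summable_mult) auto
  then have "summable (\<lambda>n. dyadic_volume (n + J1))"
  proof (rule summable_comparison_test'[of _ 0])
    show "norm (dyadic_volume (n + J1)) \<le> (2 ^ g) ^ d * dyadic_volume (J1 + g * (n div g))" for n
      using bound[of n] dyadic_volume_nonneg[of "n + J1"] by (simp add: add.commute)
  qed
  then show False using not_summable_dyadic_volume summable_iff_shift by blast
qed

text \<open>A cube of generation \<open>m\<close> around \<open>x_n\<close> lies in \<open>B(x_n, B / 2^m)\<close> when \<open>B\<close> bounds the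
  norm of the unit diagonal. Taking the least such \<open>m \<ge> J + c\<close> with \<open>B / 2^m \<le> r(2^(d J))\<close>
  makes the relative volume \<open>2^(-d (m - J))\<close> comparable to \<open>dyadic_volume J\<close>, unless it is
  capped by \<open>2^(-d c)\<close>.\<close>
definition fine_scale :: "real \<Rightarrow> nat \<Rightarrow> nat \<Rightarrow> nat" where
  "fine_scale B c J = J + c + (LEAST L. B / 2 ^ (J + c + L) \<le> dyadic_radius J)"

lemma exists_fine_scale: "\<exists>L. B / 2 ^ (J + c + L) \<le> dyadic_radius J"
proof -
  obtain L where L: "(1/2::real) ^ L < dyadic_radius J / (\<bar>B\<bar> + 1)"
    using real_arch_pow_inv[of "dyadic_radius J / (\<bar>B\<bar> + 1)" "1/2"] dyadic_radius_pos[of J] by auto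
  have "B / 2 ^ (J + c + L) \<le> \<bar>B\<bar> / 2 ^ L"
    by (intro order.trans[OF divide_right_mono[of B "\<bar>B\<bar>"]] divide_left_mono power_increasing) auto
  also have "\<dots> \<le> (\<bar>B\<bar> + 1) * (1/2) ^ L" by (simp add: power_one_over divide_right_mono)
  also have "\<dots> \<le> dyadic_radius J" using L by (simp add: field_simps)
  finally show ?thesis by blast
qed

lemma fine_scale_radius: "B / 2 ^ fine_scale B c J \<le> dyadic_radius J"
  unfolding fine_scale_def using LeastI_ex[OF exists_fine_scale[of B J c]] by simp

lemma le_fine_scale: "J + c \<le> fine_scale B c J"
  unfolding fine_scale_def by simp

lemma fine_scale_lower_bound:
  assumes B: "B > 0"
  shows "min ((1/2) ^ (d * c)) (dyadic_volume J / (2 * B) ^ d) \<le> (1/2::real) ^ (d * (fine_scale B c J - J))"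
proof (cases "LEAST L. B / 2 ^ (J + c + L) \<le> dyadic_radius J")
  case 0
  then show ?thesis by (simp add: fine_scale_def)
next
  case (Suc L)
  then have "\<not> B / 2 ^ (J + c + L) \<le> dyadic_radius J"
    using not_less_Least[of L "\<lambda>L. B / 2 ^ (J + c + L) \<le> dyadic_radius J"] by simp
  then have "2 ^ J * dyadic_radius J < 2 ^ J * (B / 2 ^ (J + c + L))"
    by (intro mult_strict_left_mono) auto
  also have "\<dots> = 2 * B * (1/2) ^ Suc (c + L)" by (simp add: power_add field_simps)
  finally have "2 ^ J * dyadic_radius J / (2 * B) \<le> (1/2) ^ (fine_scale B c J - J)"
    using B Suc by (simp add: fine_scale_def field_simps)
  then have "(2 ^ J * dyadic_radius J / (2 * B)) ^ d \<le> ((1/2) ^ (fine_scale B c J - J)) ^ d"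
    using dyadic_radius_pos[of J] B by (intro power_mono) auto
  then show ?thesis
    unfolding dyadic_volume_def by (simp add: power_divide power_mult[symmetric] mult.commute)
qed

lemma scales_exist:
  assumes \<alpha>: "\<alpha> > 0" and B: "B > 0"
  obtains g :: nat and m :: "nat \<Rightarrow> nat" and k :: nat
  where "(1/2::real) ^ g \<le> 1/2" "2 * (1/2::real) ^ g \<le> \<alpha>/8"
    and "\<And>i. J1 + g * i \<le> m i" "\<And>i. B / 2 ^ m i \<le> dyadic_radius (J1 + g * i)"
    and "\<alpha>/8 \<le> (\<Sum>i<k. (1/2::real) ^ (d * (m i - (J1 + g * i))))"
    and "(\<Sum>i<k. (1/2::real) ^ (d * (m i - (J1 + g * i)))) \<le> \<alpha>/4"
proof -
  obtain c where c: "(1/2::real) ^ c < \<alpha>/8"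
    using real_arch_pow_inv[of "\<alpha>/8" "1/2"] \<alpha> by auto
  define g where "g = Suc c"
  define m where "m i = fine_scale B c (J1 + g * i)" for i
  define t where "t i = (1/2::real) ^ (d * (m i - (J1 + g * i)))" for i
  have "t i \<le> \<alpha>/8" for i
  proof -
    have "c \<le> d * (m i - (J1 + g * i))"
      using le_fine_scale[of "J1 + g * i" c B] d unfolding m_def
      by (metis add_diff_cancel_left' diff_le_mono le_trans mult_le_mono1 mult_1)
    then have "t i \<le> (1/2) ^ c" unfolding t_def by (intro power_decreasing) auto
    then show ?thesis using c by linarith
  qed
  moreover have "\<not> summable t"
  proof
    assume "summable t"
    moreover have "norm (min ((1/2) ^ (d * c)) (1 / (2 * B) ^ d * dyadic_volume (J1 + g * i))) \<le> t i" for i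
      using fine_scale_lower_bound[OF B, of c "J1 + g * i"] dyadic_volume_nonneg[of "J1 + g * i"] B
      unfolding t_def m_def by simp
    ultimately have "summable (\<lambda>i. min ((1/2) ^ (d * c)) (1 / (2 * B) ^ d * dyadic_volume (J1 + g * i)))"
      by (rule summable_comparison_test'[of _ 0])
    moreover have "\<not> summable (\<lambda>i. min ((1/2::real) ^ (d * c)) (1 / (2 * B) ^ d * dyadic_volume (J1 + g * i)))"
      using not_summable_dyadic_volume_progression[of g J1] B by (intro not_summable_min_cmult) (auto simp: g_def)
    ultimately show False by simp
  qed
  moreover have "0 \<le> t i" for i unfolding t_def by simp
  ultimately obtain k where "\<alpha>/8 \<le> (\<Sum>i<k. t i)" "(\<Sum>i<k. t i) \<le> 2 * (\<alpha>/8)"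
    using exists_partial_sum_between[of t "\<alpha>/8"] \<alpha> by auto
  moreover have "2 * (1/2::real) ^ g \<le> \<alpha>/8" "(1/2::real) ^ g \<le> 1/2"
    using c by (auto simp: g_def power_le_one)
  moreover have "J1 + g * i \<le> m i" "B / 2 ^ m i \<le> dyadic_radius (J1 + g * i)" for i
    unfolding m_def using le_fine_scale fine_scale_radius le_add1 order.trans by blast+
  ultimately show ?thesis using that[of g m k] unfolding t_def by auto
qed

end

section \<open>Norms on \<open>\<real>\<^sup>d\<close>\<close>

lemma one_le_card_finite: "1 \<le> CARD('n::finite)"
  by (simp add: Suc_le_eq)

lemma is_normD:
  assumes "is_norm N"
  shows "0 \<le> N x" "N x = 0 \<longleftrightarrow> x = 0" "N (c *\<^sub>R x) = \<bar>c\<bar> * N x" "N (x + y) \<le> N x + N y"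
  using assms unfolding is_norm_def by auto

lemma is_norm_sum_le:
  assumes "is_norm N" "finite S"
  shows "N (sum f S) \<le> (\<Sum>i\<in>S. N (f i))"
  using assms(2)
proof (induction S rule: finite_induct)
  case empty
  then show ?case using is_normD(2)[OF assms(1), of 0] by simp
next
  case (insert a S)
  then show ?case using is_normD(4)[OF assms(1), of "f a" "sum f S"] by simp
qed

definition axis_norm_sum :: "(real^'n \<Rightarrow> real) \<Rightarrow> real" where
  "axis_norm_sum N = (\<Sum>i\<in>UNIV. N (axis i 1))"

lemma is_norm_axis_pos:
  fixes N :: "real^'n \<Rightarrow> real"
  assumes "is_norm N"
  shows "0 < N (axis i 1)"
  using is_normD(1,2)[OF assms, of "axis i 1"] by (auto simp: axis_eq_0_iff)

lemma is_norm_le_sum_components: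
  fixes N :: "real^'n \<Rightarrow> real"
  assumes "is_norm N"
  shows "N v \<le> (\<Sum>i\<in>UNIV. \<bar>v$i\<bar> * N (axis i 1))"
proof -
  have "N v = N (\<Sum>i\<in>UNIV. (v$i) *\<^sub>R axis i 1)"
    using basis_expansion[of v] by (simp add: scalar_mult_eq_scaleR)
  also have "\<dots> \<le> (\<Sum>i\<in>UNIV. N ((v$i) *\<^sub>R axis i 1))" by (rule is_norm_sum_le[OF assms]) simp
  also have "\<dots> = (\<Sum>i\<in>UNIV. \<bar>v$i\<bar> * N (axis i 1))" using is_normD(3)[OF assms] by simp
  finally show ?thesis .
qed

lemma is_norm_le_axis_norm_sum:
  fixes N :: "real^'n \<Rightarrow> real"
  assumes "is_norm N"
  shows "N v \<le> axis_norm_sum N * norm v"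
proof -
  have "N v \<le> (\<Sum>i\<in>UNIV. norm v * N (axis i 1))"
    using is_norm_le_sum_components[OF assms, of v] component_le_norm_cart[of v] is_normD(1)[OF assms]
    by (meson order.trans sum_mono mult_right_mono)
  then show ?thesis by (simp add: axis_norm_sum_def sum_distrib_left mult.commute)
qed

lemma is_norm_continuous:
  fixes N :: "real^'n \<Rightarrow> real"
  assumes "is_norm N"
  shows "continuous_on UNIV N"
proof -
  have "\<bar>N x - N y\<bar> \<le> N (x - y)" for x y
    using is_normD(4)[OF assms, of "x - y" y] is_normD(4)[OF assms, of "y - x" x]
      is_normD(3)[OF assms, of "-1" "x - y"] by simp
  moreover have "0 \<le> axis_norm_sum N"
    unfolding axis_norm_sum_def using is_norm_axis_pos[OF assms] by (simp add: sum_nonneg less_imp_le)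
  ultimately have "(axis_norm_sum N)-lipschitz_on UNIV N"
    using is_norm_le_axis_norm_sum[OF assms]
    by (intro lipschitz_onI) (auto simp: dist_real_def dist_norm intro: order.trans)
  then show ?thesis by (rule lipschitz_on_continuous_on)
qed

lemma is_norm_cube_at_lt:
  fixes N :: "real^'n \<Rightarrow> real"
  assumes "is_norm N" "y \<in> cube_at (int m) x"
  shows "N (y - x) < axis_norm_sum N / 2 ^ m"
proof -
  have "N (y - x) \<le> (\<Sum>i\<in>UNIV. \<bar>(y - x)$i\<bar> * N (axis i 1))" by (rule is_norm_le_sum_components[OF assms(1)])
  also have "\<dots> < (\<Sum>i\<in>UNIV. (1 / 2 ^ m) * N (axis i 1))"
    using abs_component_diff_lt_cube_at[OF assms(2)] is_norm_axis_pos[OF assms(1)]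
    by (intro sum_strict_mono mult_strict_right_mono) auto
  finally show ?thesis by (simp add: axis_norm_sum_def sum_divide_distrib)
qed

section \<open>Covering a large part of a regular cube\<close>

lemma mem_Mset_cube_atD:
  fixes xs :: "nat \<Rightarrow> real^'n"
  assumes "Q \<in> Mset xs (cube_at (int j0) x0) j"
  shows "Q \<subseteq> cube_at (int j0) x0" "\<And>z. z \<in> Q \<Longrightarrow> cube_at (int (j0 + j)) z = Q"
    and "\<exists>n\<ge>1. real n \<le> 2 ^ (CARD('n) * (j0 + j)) \<and> xs n \<in> Q"
proof -
  have Q: "is_dyadic Q" "Q \<subseteq> cube_at (int j0) x0" "generation Q = int (j0 + j)"
    "\<exists>n\<ge>1. real n \<le> 2 powr (real CARD('n) * real_of_int (generation Q)) \<and> xs n \<in> Q"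
    using assms unfolding Mset_def by (auto simp: generation_cube_at)
  obtain k where "Q = dyadic_cube (int (j0 + j)) k"
    using Q(1,3) unfolding is_dyadic_def by (auto simp: generation_dyadic_cube)
  then show "\<And>z. z \<in> Q \<Longrightarrow> cube_at (int (j0 + j)) z = Q" using cube_at_eq_dyadic_cube by blast
  show "Q \<subseteq> cube_at (int j0) x0" by (fact Q(2))
  show "\<exists>n\<ge>1. real n \<le> 2 ^ (CARD('n) * (j0 + j)) \<and> xs n \<in> Q"
    using Q(4) unfolding Q(3) by (simp add: powr_realpow[symmetric] of_nat_mult)
qed

lemma card_Mset_le_card_late_plus:
  fixes xs :: "nat \<Rightarrow> real^'n" and x0 :: "real^'n" and j0 j :: nat
  defines "M \<equiv> Mset xs (cube_at (int j0) x0) j"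
  assumes "finite M"
  shows "card M \<le> card {Q\<in>M. \<exists>n\<ge>K. real n \<le> 2 ^ (CARD('n) * (j0 + j)) \<and> xs n \<in> Q} + K"
proof -
  let ?C = "{Q\<in>M. \<exists>n\<ge>K. real n \<le> 2 ^ (CARD('n) * (j0 + j)) \<and> xs n \<in> Q}"
  have "M - ?C \<subseteq> (\<lambda>n. cube_at (int (j0 + j)) (xs n)) ` {..<K}"
  proof
    fix Q assume Q: "Q \<in> M - ?C"
    then obtain n where n: "real n \<le> 2 ^ (CARD('n) * (j0 + j))" "xs n \<in> Q"
      using mem_Mset_cube_atD(3) unfolding M_def by blast
    have "\<not> K \<le> n" using Q n by blast
    then have "n < K" by simp
    moreover have "cube_at (int (j0 + j)) (xs n) = Q"
      using Q n(2) mem_Mset_cube_atD(2) unfolding M_def by blast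
    ultimately show "Q \<in> (\<lambda>n. cube_at (int (j0 + j)) (xs n)) ` {..<K}" by blast
  qed
  then have "card (M - ?C) \<le> card ((\<lambda>n. cube_at (int (j0 + j)) (xs n)) ` {..<K})"
    by (intro card_mono) auto
  also have "\<dots> \<le> K" using card_image_le[of "{..<K}"] by simp
  finally have "card (M - ?C) \<le> K" .
  moreover have "card (?C \<union> (M - ?C)) = card ?C + card (M - ?C)"
    using assms(2) by (intro card_Un_disjoint) auto
  moreover have "?C \<union> (M - ?C) = M" by blast
  ultimately show ?thesis by simp
qed

lemma exists_cube_centers:
  fixes xs :: "nat \<Rightarrow> real^'n" and x0 :: "real^'n"
  assumes hyp: "\<alpha> * 2 ^ (CARD('n) * j) \<le> real (card (Mset xs (cube_at (int j0) x0) j))"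
    and K: "real K * (1/2) ^ (CARD('n) * j) \<le> \<alpha>/2" and \<alpha>: "\<alpha> > 0"
  obtains P where "finite P" "inj_on (cube_at (int (j0 + j))) P"
    and "\<And>p. p \<in> P \<Longrightarrow> cube_at (int (j0 + j)) p \<subseteq> cube_at (int j0) x0"
    and "\<And>p. p \<in> P \<Longrightarrow> \<exists>n\<ge>K. real n \<le> 2 ^ (CARD('n) * (j0 + j)) \<and> p = xs n"
    and "(\<alpha>/2) * (1/2) ^ (CARD('n) * j0) \<le> real (card P) * (1/2) ^ (CARD('n) * (j0 + j))"
proof -
  define d where "d = CARD('n)"
  define M where "M = Mset xs (cube_at (int j0) x0) j"
  define C where "C = {Q\<in>M. \<exists>n\<ge>K. real n \<le> 2 ^ (d * (j0 + j)) \<and> xs n \<in> Q}"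
  have "0 < real (card M)"
    using hyp \<alpha> unfolding M_def by (smt (verit) zero_less_power mult_pos_pos)
  then have "finite M" by (simp add: card_gt_0_iff)
  then have "card M \<le> card C + K"
    unfolding M_def C_def d_def by (rule card_Mset_le_card_late_plus)
  then have card: "\<alpha> * 2 ^ (d * j) - K \<le> real (card C)"
    using hyp unfolding M_def d_def by linarith
  define f where "f Q = xs (SOME n. K \<le> n \<and> real n \<le> 2 ^ (d * (j0 + j)) \<and> xs n \<in> Q)" for Q
  have f: "\<exists>n\<ge>K. real n \<le> 2 ^ (d * (j0 + j)) \<and> f Q = xs n \<and> f Q \<in> Q" if "Q \<in> C" for Q
    using someI_ex[of "\<lambda>n. K \<le> n \<and> real n \<le> 2 ^ (d * (j0 + j)) \<and> xs n \<in> Q"] that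
    unfolding C_def f_def by blast
  have sub: "Q \<subseteq> cube_at (int j0) x0" "cube_at (int (j0 + j)) (f Q) = Q" if "Q \<in> C" for Q
    using that f[OF that] mem_Mset_cube_atD(1,2) unfolding C_def M_def by blast+
  then have inj: "inj_on f C" by (metis inj_onI)
  have inj_cube: "inj_on (cube_at (int (j0 + j))) (f ` C)"
  proof (rule inj_onI)
    fix p q assume "p \<in> f ` C" "q \<in> f ` C" and eq: "cube_at (int (j0 + j)) p = cube_at (int (j0 + j)) q"
    then obtain a b where "a \<in> C" "b \<in> C" "p = f a" "q = f b" by blast
    with eq sub(2) show "p = q" by metis
  qed
  have "(1/2::real) ^ (d * (j0 + j)) = (1/2) ^ (d * j0) * (1/2) ^ (d * j)"
    by (simp add: add_mult_distrib2 power_add)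
  then have "(\<alpha> * 2 ^ (d * j) - K) * (1/2) ^ (d * (j0 + j)) = (\<alpha> - K * (1/2) ^ (d * j)) * (1/2) ^ (d * j0)"
    by (simp add: field_simps)
  then have "(\<alpha>/2) * (1/2) ^ (d * j0) \<le> (\<alpha> * 2 ^ (d * j) - K) * (1/2) ^ (d * (j0 + j))"
    using K unfolding d_def by (simp add: mult_right_mono)
  also have "\<dots> \<le> real (card (f ` C)) * (1/2) ^ (d * (j0 + j))"
    using card inj by (simp add: card_image)
  finally have bound: "(\<alpha>/2) * (1/2) ^ (d * j0) \<le> real (card (f ` C)) * (1/2) ^ (d * (j0 + j))" .
  show ?thesis
  proof (rule that[OF _ inj_cube])
    show "finite (f ` C)" using \<open>finite M\<close> unfolding C_def by simp
    show "cube_at (int (j0 + j)) p \<subseteq> cube_at (int j0) x0" if "p \<in> f ` C" for p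
      using that sub by auto
    show "\<exists>n\<ge>K. real n \<le> 2 ^ (CARD('n) * (j0 + j)) \<and> p = xs n" if "p \<in> f ` C" for p
      using that f unfolding d_def by blast
  qed (use bound in \<open>simp add: d_def\<close>)
qed

lemma measure_Int_UN_cube_at_le_scaled:
  fixes P P' :: "(real^'n) set"
  defines "h \<equiv> \<lambda>n. (1/2::real) ^ (CARD('n) * n)"
  assumes "finite P" "finite P'" "inj_on (cube_at (int J')) P'"
    and "J \<le> m" "J \<le> J'" "J' \<le> m'" and V: "real (card P) * h J \<le> V"
  shows "measure lebesgue ((\<Union>p\<in>P. cube_at (int m) p) \<inter> (\<Union>p'\<in>P'. cube_at (int m') p'))
    \<le> V * (h (m - J) * h (m' - J') + h (J' - J) * h (m' - J'))"
proof -
  have split: "h b = h a * h (b - a)" if "a \<le> b" for a b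
    unfolding h_def using that by (simp add: power_add[symmetric] add_mult_distrib2[symmetric])
  have "measure lebesgue ((\<Union>p\<in>P. cube_at (int m) p) \<inter> (\<Union>p'\<in>P'. cube_at (int m') p'))
      \<le> real (card P) * (h m + h J') * h (m' - J')"
    unfolding h_def using assms(2-4,7) by (rule measure_Int_UN_cube_at_le)
  also have "\<dots> = real (card P) * h J * (h (m - J) * h (m' - J') + h (J' - J) * h (m' - J'))"
    using split[OF assms(5)] split[OF assms(6)] by (simp add: algebra_simps)
  also have "\<dots> \<le> V * (h (m - J) * h (m' - J') + h (J' - J) * h (m' - J'))"
    using V by (intro mult_right_mono) (auto simp: h_def)
  finally show ?thesis .
qed

lemma UN_cube_at_centers_close:
  fixes N :: "real^'n \<Rightarrow> real" and xs :: "nat \<Rightarrow> real^'n"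
  assumes N: "is_norm N" and r: "P_seq CARD('n) r" and K: "1 \<le> K"
    and m: "axis_norm_sum N / 2 ^ m \<le> dyadic_radius CARD('n) r J"
    and P: "\<And>p. p \<in> P \<Longrightarrow> \<exists>n\<ge>K. real n \<le> 2 ^ (CARD('n) * J) \<and> p = xs n"
    and y: "y \<in> (\<Union>p\<in>P. cube_at (int m) p)"
  shows "\<exists>n\<ge>K. N (y - xs n) < r n"
proof -
  obtain n where n: "K \<le> n" "real n \<le> 2 ^ (CARD('n) * J)" "y \<in> cube_at (int m) (xs n)"
    using y P by blast
  have "N (y - xs n) < axis_norm_sum N / 2 ^ m" by (rule is_norm_cube_at_lt[OF N n(3)])
  also have "\<dots> \<le> r (2 ^ (CARD('n) * J))"
    using m unfolding dyadic_radius_def[OF one_le_card_finite r] .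
  also have "\<dots> \<le> r n"
    using n K of_nat_le_iff[of n "2 ^ (CARD('n) * J)"]
    by (intro P_seq_antimono[OF _ r]) auto
  finally show ?thesis using n(1) by blast
qed

lemma exists_cube_centers_at_scales:
  fixes xs :: "nat \<Rightarrow> real^'n" and x0 :: "real^'n" and J :: "nat \<Rightarrow> nat"
  assumes hyp: "\<And>j. jl \<le> j \<Longrightarrow> \<alpha> * 2 ^ (CARD('n) * j) \<le> real (card (Mset xs (cube_at (int j0) x0) j))"
    and \<alpha>: "\<alpha> > 0" and K: "\<And>i. real K * (1/2) ^ (CARD('n) * (J i - j0)) \<le> \<alpha>/2"
    and J: "\<And>i. j0 + jl \<le> J i"
  obtains P :: "nat \<Rightarrow> (real^'n) set"
  where "\<And>i. finite (P i)" "\<And>i. inj_on (cube_at (int (J i))) (P i)"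
    and "\<And>i p. p \<in> P i \<Longrightarrow> cube_at (int (J i)) p \<subseteq> cube_at (int j0) x0"
    and "\<And>i p. p \<in> P i \<Longrightarrow> \<exists>n\<ge>K. real n \<le> 2 ^ (CARD('n) * J i) \<and> p = xs n"
    and "\<And>i. (\<alpha>/2) * (1/2) ^ (CARD('n) * j0) \<le> real (card (P i)) * (1/2) ^ (CARD('n) * J i)"
proof -
  define centers where "centers i P \<longleftrightarrow> finite P \<and> inj_on (cube_at (int (J i))) P
      \<and> (\<forall>p\<in>P. cube_at (int (J i)) p \<subseteq> cube_at (int j0) x0)
      \<and> (\<forall>p\<in>P. \<exists>n\<ge>K. real n \<le> 2 ^ (CARD('n) * J i) \<and> p = xs n)
      \<and> (\<alpha>/2) * (1/2) ^ (CARD('n) * j0) \<le> real (card P) * (1/2) ^ (CARD('n) * J i)"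
    for i P
  have "\<exists>P. centers i P" for i
  proof -
    have Ji: "j0 + (J i - j0) = J i" "jl \<le> J i - j0" using J[of i] by auto
    obtain P where "finite P" "inj_on (cube_at (int (j0 + (J i - j0)))) P"
      "\<And>p. p \<in> P \<Longrightarrow> cube_at (int (j0 + (J i - j0))) p \<subseteq> cube_at (int j0) x0"
      "\<And>p. p \<in> P \<Longrightarrow> \<exists>n\<ge>K. real n \<le> 2 ^ (CARD('n) * (j0 + (J i - j0))) \<and> p = xs n"
      "(\<alpha>/2) * (1/2) ^ (CARD('n) * j0) \<le> real (card P) * (1/2) ^ (CARD('n) * (j0 + (J i - j0)))"
      using exists_cube_centers[OF hyp[OF Ji(2)] K \<alpha>] by blast
    then have "centers i P" unfolding centers_def Ji(1) by blast
    then show ?thesis ..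
  qed
  then obtain P where "centers i (P i)" for i by metis
  then show ?thesis using that unfolding centers_def by blast
qed

text \<open>Generations \<open>g\<close> apart make the unions of cubes at different scales almost independent:
  a pairwise overlap is the product of the relative volumes plus a term decaying geometrically
  in the distance of the scales, so the inclusion-exclusion bound keeps a fixed fraction.\<close>
lemma measure_UN_multiscale_ge:
  fixes P :: "nat \<Rightarrow> (real^'n) set" and J m :: "nat \<Rightarrow> nat"
  defines "h \<equiv> \<lambda>n. (1/2::real) ^ (CARD('n) * n)"
  assumes P: "\<And>i. finite (P i)" "\<And>i. inj_on (cube_at (int (J i))) (P i)"
    and card_P: "\<And>i. (\<alpha>/2) * V \<le> real (card (P i)) * h (J i)" "\<And>i. real (card (P i)) * h (J i) \<le> V"
    and Jm: "\<And>i. J i \<le> m i" and J: "\<And>i. J i = J1 + g * i"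
    and x: "(1/2::real) ^ g \<le> 1/2" "2 * (1/2::real) ^ g \<le> \<alpha>/8"
    and T: "\<alpha>/8 \<le> (\<Sum>i<k. h (m i - J i))" "(\<Sum>i<k. h (m i - J i)) \<le> \<alpha>/4"
  shows "V * (\<alpha>^2/64) \<le> measure lebesgue (\<Union>i<k. \<Union>p\<in>P i. cube_at (int (m i)) p)"
proof -
  define A where "A i = (\<Union>p\<in>P i. cube_at (int (m i)) p)" for i
  define t where "t i = h (m i - J i)" for i
  have "0 \<le> real (card (P 0)) * h (J 0)" by (simp add: h_def)
  then have V: "0 \<le> V" using card_P(2)[of 0] by linarith
  have A_lmeasurable: "A i \<in> lmeasurable" for i
    unfolding A_def using P(1) by (rule UN_cube_at_lmeasurable)
  have single: "(\<alpha>/2) * V * t i \<le> measure lebesgue (A i)" for i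
  proof -
    have "h (m i) = h (J i) * t i"
      using Jm[of i] unfolding h_def t_def by (simp add: power_add[symmetric] add_mult_distrib2[symmetric])
    then have "measure lebesgue (A i) = real (card (P i)) * h (J i) * t i"
      unfolding A_def measure_UN_cube_at[OF P(1,2) Jm] by (simp add: h_def)
    then show ?thesis using card_P(1)[of i] by (simp add: mult_right_mono t_def h_def)
  qed
  have pair: "measure lebesgue (A i' \<inter> A i) \<le> V * (t i' * t i + ((1/2) ^ g) ^ (i - i') * t i)"
    if "i' < i" for i i'
  proof -
    have "J i' \<le> J i" using that unfolding J by simp
    then have "measure lebesgue (A i' \<inter> A i) \<le> V * (t i' * t i + h (J i - J i') * t i)"
      using measure_Int_UN_cube_at_le_scaled[OF P(1) P(1) P(2) Jm _ Jm card_P(2)[unfolded h_def]]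
      unfolding A_def t_def h_def by simp
    moreover have "h (J i - J i') \<le> ((1/2) ^ g) ^ (i - i')"
    proof -
      have "J i - J i' = g * (i - i')" unfolding J using that by (simp add: diff_mult_distrib2)
      then show ?thesis
        unfolding h_def power_mult[symmetric] using one_le_card_finite by (intro power_decreasing) auto
    qed
    then have "V * (t i' * t i + h (J i - J i') * t i) \<le> V * (t i' * t i + ((1/2) ^ g) ^ (i - i') * t i)"
      using V by (intro mult_left_mono add_left_mono mult_right_mono) (auto simp: t_def h_def)
    ultimately show ?thesis by linarith
  qed
  have "V * (\<alpha>^2/64) \<le> (\<Sum>i<k. measure lebesgue (A i)) - (\<Sum>i<k. \<Sum>i'<i. measure lebesgue (A i' \<inter> A i))"
    using single pair x T V unfolding t_def
    by (intro sum_minus_pairwise_lower_bound[where t = t]) (auto simp: t_def h_def)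
  also have "\<dots> \<le> measure lebesgue (\<Union>i<k. A i)"
    using A_lmeasurable by (rule measure_UN_ge_sum_minus_pairwise)
  finally show ?thesis unfolding A_def .
qed

lemma covered_part_of_cube:
  fixes N :: "real^'n \<Rightarrow> real" and xs :: "nat \<Rightarrow> real^'n" and x0 :: "real^'n"
  assumes N: "is_norm N" and r: "P_seq CARD('n) r" and K: "1 \<le> K" and \<alpha>: "\<alpha> > 0"
    and hyp: "\<And>j. jl \<le> j \<Longrightarrow> \<alpha> * 2 ^ (CARD('n) * j) \<le> real (card (Mset xs (cube_at (int j0) x0) j))"
  obtains A where "A \<in> lmeasurable" "A \<subseteq> cube_at (int j0) x0" "\<And>y. y \<in> A \<Longrightarrow> \<exists>n\<ge>K. N (y - xs n) < r n"
    and "(1/2) ^ (CARD('n) * j0) * (\<alpha>^2/64) \<le> measure lebesgue A"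
proof -
  define d where "d = CARD('n)"
  define h where "h n = (1/2::real) ^ (d * n)" for n
  have d: "1 \<le> d" unfolding d_def by (rule one_le_card_finite)
  have B: "axis_norm_sum N > 0"
    unfolding axis_norm_sum_def using is_norm_axis_pos[OF N] by (simp add: sum_pos)
  \<comment> \<open>Going \<open>e\<close> generations deeper than \<open>j0 + jl\<close> makes the at most \<open>K\<close> cubes that are hit
    only by \<open>x_1, \<dots>, x_(K-1)\<close> negligible.\<close>
  obtain e where "(1/2::real) ^ e < \<alpha> / (2 * K)"
    using real_arch_pow_inv[of "\<alpha> / (2 * K)" "1/2"] \<alpha> K by auto
  then have e: "real K * (1/2) ^ e \<le> \<alpha>/2" using K by (simp add: field_simps)
  define J1 where "J1 = j0 + jl + e"
  obtain g m k where x: "(1/2::real) ^ g \<le> 1/2" "2 * (1/2::real) ^ g \<le> \<alpha>/8"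
    and m: "\<And>i. J1 + g * i \<le> m i" "\<And>i. axis_norm_sum N / 2 ^ m i \<le> dyadic_radius d r (J1 + g * i)"
    and T: "\<alpha>/8 \<le> (\<Sum>i<k. h (m i - (J1 + g * i)))" "(\<Sum>i<k. h (m i - (J1 + g * i))) \<le> \<alpha>/4"
    unfolding h_def by (rule scales_exist[OF d r[folded d_def] \<alpha> B, of J1]) blast
  define J where "J i = J1 + g * i" for i
  have "real K * (1/2) ^ (CARD('n) * (J i - j0)) \<le> \<alpha>/2" for i
  proof -
    have "e \<le> d * (J i - j0)"
      using d unfolding J_def J1_def by (auto intro: order.trans[OF _ mult_le_mono1[of 1 d]])
    then have "real K * (1/2) ^ (d * (J i - j0)) \<le> real K * (1/2) ^ e"
      by (intro mult_left_mono power_decreasing) auto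
    then show ?thesis using e unfolding d_def by linarith
  qed
  moreover have "j0 + jl \<le> J i" for i unfolding J_def J1_def by simp
  ultimately obtain P where P: "\<And>i. finite (P i)" "\<And>i. inj_on (cube_at (int (J i))) (P i)"
    "\<And>i p. p \<in> P i \<Longrightarrow> cube_at (int (J i)) p \<subseteq> cube_at (int j0) x0"
    "\<And>i p. p \<in> P i \<Longrightarrow> \<exists>n\<ge>K. real n \<le> 2 ^ (d * J i) \<and> p = xs n"
    "\<And>i. (\<alpha>/2) * h j0 \<le> real (card (P i)) * h (J i)"
    using exists_cube_centers_at_scales[OF hyp \<alpha>] unfolding h_def d_def by metis
  have Jm: "J i \<le> m i" for i using m(1) unfolding J_def .
  have card_P: "real (card (P i)) * h (J i) \<le> h j0" for i
    using card_mult_measure_cube_at_le[OF P(2) P(3) cube_at_lmeasurable]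
    unfolding h_def d_def measure_cube_at by blast
  show ?thesis
  proof (rule that)
    let ?A = "\<Union>i<k. \<Union>p\<in>P i. cube_at (int (m i)) p"
    show "?A \<in> lmeasurable" using P(1) by (intro fmeasurable.finite_UN UN_cube_at_lmeasurable) auto
    show "?A \<subseteq> cube_at (int j0) x0"
      using P(3) cube_at_antimono[of "int (J i)" "int (m i)" for i] Jm by fastforce
    show "\<exists>n\<ge>K. N (y - xs n) < r n" if "y \<in> ?A" for y
      using that UN_cube_at_centers_close[OF N r K m(2)[unfolded d_def] P(4)[unfolded d_def J_def]]
      unfolding J_def by blast
    show "(1/2) ^ (CARD('n) * j0) * (\<alpha>^2/64) \<le> measure lebesgue ?A"
      using measure_UN_multiscale_ge[OF P(1,2) P(5)[unfolded h_def d_def] card_P[unfolded h_def d_def]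
          Jm J_def x T[folded J_def, unfolded h_def d_def]]
      by (simp add: h_def d_def)
  qed
qed

section \<open>Dense dyadic cubes\<close>

definition dyadic_inner :: "nat \<Rightarrow> (real^'n) set \<Rightarrow> (real^'n) set" where
  "dyadic_inner J S = {x. cube_at (int J) x \<subseteq> S}"

definition cubes_inside :: "nat \<Rightarrow> (real^'n) set \<Rightarrow> (real^'n) set set" where
  "cubes_inside J S = {cube_at (int J) x | x. cube_at (int J) x \<subseteq> S}"

lemma dyadic_inner_eq_Union: "dyadic_inner J S = \<Union>(cubes_inside J S)"
  unfolding dyadic_inner_def cubes_inside_def using mem_cube_at_self cube_at_eq_of_mem by blast

lemma dyadic_inner_subset: "dyadic_inner J S \<subseteq> S"
  unfolding dyadic_inner_def using mem_cube_at_self by blast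

lemma incseq_dyadic_inner: "incseq (\<lambda>J. dyadic_inner J S)"
proof (rule monoI, rule subsetI)
  fix J J' :: nat and x assume "J \<le> J'" "x \<in> dyadic_inner J S"
  then show "x \<in> dyadic_inner J' S"
    using cube_at_antimono[of "int J" "int J'" x] unfolding dyadic_inner_def by auto
qed

lemma UN_dyadic_inner_open:
  assumes "open S"
  shows "(\<Union>J. dyadic_inner J S) = S"
proof (intro equalityI subsetI)
  fix x assume "x \<in> S"
  then obtain \<delta> where \<delta>: "\<delta> > 0" "ball x \<delta> \<subseteq> S" using assms open_contains_ball by blast
  have "\<exists>N. \<forall>J\<ge>N. cube_at (int J) x \<subseteq> ball x \<delta>"
    using eventually_cube_at_subset_ball[OF \<delta>(1), of x] unfolding eventually_sequentially .
  then obtain J where "cube_at (int J) x \<subseteq> ball x \<delta>" by blast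
  then have "x \<in> dyadic_inner J S" using \<delta>(2) unfolding dyadic_inner_def by blast
  then show "x \<in> (\<Union>J. dyadic_inner J S)" by blast
qed (use dyadic_inner_subset in blast)

lemma disjoint_cubes_inside: "pairwise disjnt (cubes_inside J S)"
  unfolding pairwise_def disjnt_def cubes_inside_def using cube_at_disjoint by blast

lemma cubes_inside_lmeasurable: "Q \<in> cubes_inside J S \<Longrightarrow> Q \<in> lmeasurable"
  unfolding cubes_inside_def using cube_at_lmeasurable by blast

lemma finite_cubes_inside:
  fixes S :: "(real^'n) set"
  assumes "S \<in> lmeasurable"
  shows "finite (cubes_inside J S)"
proof -
  have "Q \<in> lmeasurable \<and> measure lebesgue Q = (1/2) ^ (CARD('n) * J) \<and> Q \<subseteq> S"
    if "Q \<in> cubes_inside J S" for Q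
    using that measure_cube_at unfolding cubes_inside_def by (auto simp: cube_at_lmeasurable)
  then show ?thesis
    using finite_disjoint_family_card_mult_le_measure[OF _ disjoint_cubes_inside assms] by simp
qed

lemma dyadic_inner_lmeasurable:
  assumes "S \<in> lmeasurable"
  shows "dyadic_inner J S \<in> lmeasurable"
  unfolding dyadic_inner_eq_Union
  using finite_cubes_inside[OF assms] cubes_inside_lmeasurable by (intro fmeasurable.finite_Union) auto

lemma exists_dense_cube_at:
  fixes E S :: "(real^'n) set"
  assumes E: "E \<in> lmeasurable" and S: "S \<in> lmeasurable" and c: "0 \<le> c"
    and dense: "c * measure lebesgue S < measure lebesgue (E \<inter> dyadic_inner J S)"
  obtains x0 where "x0 \<in> E" "c * (1/2) ^ (CARD('n) * J) < measure lebesgue (E \<inter> cube_at (int J) x0)"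
proof (rule ccontr)
  note dense_cube = that
  assume no_dense: "\<not> thesis"
  have sparse: "measure lebesgue (E \<inter> Q) \<le> c * measure lebesgue Q" if Q: "Q \<in> cubes_inside J S" for Q
  proof (cases "E \<inter> Q = {}")
    case False
    then obtain y where y: "y \<in> E" "y \<in> Q" by blast
    have Qy: "Q = cube_at (int J) y" using Q y(2) cube_at_eq_of_mem unfolding cubes_inside_def by blast
    have "\<not> c * (1/2) ^ (CARD('n) * J) < measure lebesgue (E \<inter> cube_at (int J) y)"
      using no_dense dense_cube[OF y(1)] by blast
    then show ?thesis unfolding Qy measure_cube_at by simp
  qed (use c in simp)
  note fin = finite_cubes_inside[OF S, of J]
  note lm = cubes_inside_lmeasurable[of _ J S]
  have "measure lebesgue (E \<inter> dyadic_inner J S) = (\<Sum>Q\<in>cubes_inside J S. measure lebesgue (E \<inter> Q))"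
    unfolding dyadic_inner_eq_Union Int_Union
    using fin lm disjoint_cubes_inside[of J S] E
    by (subst measure_UNION') (auto simp: pairwise_def disjnt_def intro: fmeasurable.Int)
  also have "\<dots> \<le> (\<Sum>Q\<in>cubes_inside J S. c * measure lebesgue Q)"
    using sparse by (rule sum_mono)
  also have "\<dots> = c * measure lebesgue (dyadic_inner J S)"
    unfolding dyadic_inner_eq_Union sum_distrib_left[symmetric]
    using fin lm disjoint_cubes_inside by (subst measure_Union') auto
  also have "\<dots> \<le> c * measure lebesgue S"
    using dyadic_inner_subset dyadic_inner_lmeasurable[OF S] S
    by (intro mult_left_mono c measure_mono_fmeasurable) (auto intro: fmeasurableD)
  finally show False using dense by simp
qed

lemma lmeasurable_outer_open:
  fixes E :: "'a::euclidean_space set"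
  assumes E: "E \<in> lmeasurable" and \<eta>: "\<eta> > 0"
  obtains S where "open S" "E \<subseteq> S" "S \<in> lmeasurable" "measure lebesgue S < measure lebesgue E + \<eta>"
proof -
  obtain S where S: "open S" "E \<subseteq> S" "S - E \<in> lmeasurable" "emeasure lebesgue (S - E) < ennreal \<eta>"
    using sets_lebesgue_outer_open[OF fmeasurableD[OF E] \<eta>] by blast
  have "S = E \<union> (S - E)" using S(2) by blast
  then have lm: "S \<in> lmeasurable" using fmeasurable.Un[OF E S(3)] by simp
  have "measure lebesgue (S - E) < \<eta>"
    using S(4) emeasure_eq_measure2[OF S(3)] \<eta> by (simp add: ennreal_less_iff)
  moreover have "measure lebesgue (S - E) = measure lebesgue S - measure lebesgue E"
    using S(2) lm E by (intro measure_Diff) (auto simp: fmeasurable_def)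
  ultimately show ?thesis using that S(1,2) lm by simp
qed

lemma tendsto_measure_Int_dyadic_inner:
  fixes E :: "(real^'n) set"
  assumes "E \<in> lmeasurable" "open S" "E \<subseteq> S" "S \<in> lmeasurable"
  shows "(\<lambda>J. measure lebesgue (E \<inter> dyadic_inner J S)) \<longlonglongrightarrow> measure lebesgue E"
proof -
  have "(\<Union>J. E \<inter> dyadic_inner J S) = E" using UN_dyadic_inner_open[OF assms(2)] assms(3) by blast
  moreover have "(\<lambda>J. measure lebesgue (E \<inter> dyadic_inner J S)) \<longlonglongrightarrow> measure lebesgue (\<Union>J. E \<inter> dyadic_inner J S)"
  proof (rule Lim_measure_incseq)
    show "range (\<lambda>J. E \<inter> dyadic_inner J S) \<subseteq> sets lebesgue"
      using assms(1,4) dyadic_inner_lmeasurable by (auto intro!: sets.Int fmeasurableD)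
    show "incseq (\<lambda>J. E \<inter> dyadic_inner J S)"
      using incseq_dyadic_inner[of S] by (auto simp: incseq_def)
    show "emeasure lebesgue (\<Union>J. E \<inter> dyadic_inner J S) \<noteq> \<infinity>"
      unfolding calculation using fmeasurableD2[OF assms(1)] by simp
  qed
  ultimately show ?thesis by simp
qed

lemma exists_dense_cube_at_fine:
  fixes E :: "(real^'n) set"
  assumes E: "E \<in> lmeasurable" "0 < measure lebesgue E" and \<epsilon>: "0 < \<epsilon>" "\<epsilon> < 1"
  obtains j0 x0 where "J0 \<le> j0" "x0 \<in> E"
    and "(1 - \<epsilon>) * (1/2) ^ (CARD('n) * j0) < measure lebesgue (E \<inter> cube_at (int j0) x0)"
proof -
  define \<eta> where "\<eta> = \<epsilon> * measure lebesgue E / 2"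
  have \<eta>: "\<eta> > 0" unfolding \<eta>_def using E \<epsilon> by simp
  obtain S where S: "open S" "E \<subseteq> S" "S \<in> lmeasurable" "measure lebesgue S < measure lebesgue E + \<eta>"
    using lmeasurable_outer_open[OF E(1) \<eta>] by blast
  have "eventually (\<lambda>J. measure lebesgue E - \<eta> < measure lebesgue (E \<inter> dyadic_inner J S)) sequentially"
    using tendsto_measure_Int_dyadic_inner[OF E(1) S(1-3)] \<eta> by (intro order_tendstoD) auto
  then obtain J where J: "J0 \<le> J" "measure lebesgue E - \<eta> < measure lebesgue (E \<inter> dyadic_inner J S)"
    unfolding eventually_sequentially by (metis le_add2 add.commute)
  have "(1 - \<epsilon>) * measure lebesgue S \<le> (1 - \<epsilon>) * (measure lebesgue E + \<eta>)"
    using S(4) \<epsilon> by (intro mult_left_mono) auto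
  also have "\<dots> \<le> measure lebesgue E - \<eta>"
    using \<epsilon> \<eta> unfolding \<eta>_def by (simp add: algebra_simps)
  finally have "(1 - \<epsilon>) * measure lebesgue S < measure lebesgue (E \<inter> dyadic_inner J S)"
    using J(2) by linarith
  then obtain x0 where "x0 \<in> E" "(1 - \<epsilon>) * (1/2) ^ (CARD('n) * J) < measure lebesgue (E \<inter> cube_at (int J) x0)"
    using exists_dense_cube_at[OF E(1) S(3)] \<epsilon> by (metis diff_ge_0_iff_ge less_imp_le)
  with J(1) that show ?thesis by blast
qed

section \<open>The exceptional set is null\<close>

definition uncovered_set :: "(real^'n \<Rightarrow> real) \<Rightarrow> (nat \<Rightarrow> real^'n) \<Rightarrow> (nat \<Rightarrow> real) \<Rightarrow> nat \<Rightarrow> (real^'n) set" where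
  "uncovered_set N xs r K = {x::real^'n. \<forall>n\<ge>K. r n \<le> N (x - xs n)}"

text \<open>The points whose constants in the hypothesis can be taken to be \<open>\<alpha>(x) = \<alpha>\<close> and
  \<open>j(x) = jl\<close>.\<close>
definition regular_set :: "(nat \<Rightarrow> real^'n) \<Rightarrow> real \<Rightarrow> nat \<Rightarrow> (real^'n) set" where
  "regular_set xs \<alpha> jl = {x::real^'n. \<forall>j0 j. jl \<le> j0 \<and> jl \<le> j \<longrightarrow>
     \<alpha> * 2 ^ (CARD('n) * j) \<le> real (card (Mset xs (cube_at (int j0) x) j))}"

lemma closed_uncovered_set:
  assumes "is_norm N"
  shows "closed (uncovered_set N xs r K)"
proof -
  have "continuous_on UNIV (\<lambda>x. N (x - xs n))" for n
    by (rule continuous_on_compose2[OF is_norm_continuous[OF assms]]) (auto intro!: continuous_intros)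
  then have "closed {x. r n \<le> N (x - xs n)}" for n
    by (intro closed_Collect_le continuous_on_const)
  moreover have "uncovered_set N xs r K = (\<Inter>n\<in>{K..}. {x. r n \<le> N (x - xs n)})"
    unfolding uncovered_set_def by auto
  ultimately show ?thesis by (simp add: closed_INT)
qed

lemma sets_lebesgue_regular_set:
  fixes xs :: "nat \<Rightarrow> real^'n"
  shows "regular_set xs \<alpha> jl \<in> sets lebesgue"
proof -
  have "regular_set xs \<alpha> jl = (\<Inter>j0. \<Inter>j. {x. jl \<le> j0 \<and> jl \<le> j \<longrightarrow>
     \<alpha> * 2 ^ (CARD('n) * j) \<le> real (card (Mset xs (cube_at (int j0) x) j))})"
    unfolding regular_set_def by blast
  also have "\<dots> \<in> sets lebesgue"
  proof (intro sets.countable_INT'')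
    fix j0 j :: nat
    show "{x::real^'n. jl \<le> j0 \<and> jl \<le> j \<longrightarrow> \<alpha> * 2 ^ (CARD('n) * j) \<le> real (card (Mset xs (cube_at (int j0) x) j))}
        \<in> sets lebesgue"
      by (rule sets_lebesgue_cube_at_pred[where Pr = "\<lambda>Q. jl \<le> j0 \<and> jl \<le> j \<longrightarrow>
        \<alpha> * 2 ^ (CARD('n) * j) \<le> real (card (Mset xs Q j))"])
  qed (use sets.top[of "lebesgue :: (real^'n) measure"] in simp_all)
  finally show ?thesis .
qed

lemma regular_set_antimono:
  assumes "\<beta> \<le> \<alpha>"
  shows "regular_set xs \<alpha> jl \<subseteq> regular_set xs \<beta> jl"
proof -
  have "\<beta> * 2 ^ (CARD('n) * j) \<le> \<alpha> * 2 ^ (CARD('n) * j)" for j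
    using assms by (intro mult_right_mono) auto
  then show ?thesis unfolding regular_set_def by (blast intro: order.trans)
qed

lemma measure_uncovered_Int_cube_at_le:
  fixes N :: "real^'n \<Rightarrow> real" and xs :: "nat \<Rightarrow> real^'n"
  assumes N: "is_norm N" and r: "P_seq CARD('n) r" and K: "1 \<le> K" and \<alpha>: "\<alpha> > 0"
    and E: "E \<in> lmeasurable" "E \<subseteq> uncovered_set N xs r K"
    and x0: "x0 \<in> regular_set xs \<alpha> jl" and j0: "jl \<le> j0"
  shows "measure lebesgue (E \<inter> cube_at (int j0) x0) \<le> (1 - \<alpha>^2/64) * (1/2) ^ (CARD('n) * j0)"
proof -
  have "\<alpha> * 2 ^ (CARD('n) * j) \<le> real (card (Mset xs (cube_at (int j0) x0) j))" if "jl \<le> j" for j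
    using x0 j0 that unfolding regular_set_def by blast
  then obtain A where A: "A \<in> lmeasurable" "A \<subseteq> cube_at (int j0) x0"
    "\<And>y. y \<in> A \<Longrightarrow> \<exists>n\<ge>K. N (y - xs n) < r n"
    "(1/2) ^ (CARD('n) * j0) * (\<alpha>^2/64) \<le> measure lebesgue A"
    using covered_part_of_cube[OF N r K \<alpha>] by metis
  have "(E \<inter> cube_at (int j0) x0) \<inter> A = {}"
    using A(3) E(2) unfolding uncovered_set_def by (force simp: not_less[symmetric])
  then have "measure lebesgue (E \<inter> cube_at (int j0) x0) + measure lebesgue A \<le> (1/2) ^ (CARD('n) * j0)"
    using measure_add_le_of_disjoint_subsets[OF fmeasurable.Int[OF E(1) cube_at_lmeasurable] A(1)
        cube_at_lmeasurable[of "int j0" x0]] A(2)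
    by (simp add: measure_cube_at)
  then show ?thesis using A(4) by (simp add: algebra_simps)
qed

lemma null_sets_uncovered_regular_Int_cball:
  fixes N :: "real^'n \<Rightarrow> real" and xs :: "nat \<Rightarrow> real^'n"
  assumes N: "is_norm N" and r: "P_seq CARD('n) r" and K: "1 \<le> K" and \<alpha>: "\<alpha> > 0"
  shows "uncovered_set N xs r K \<inter> regular_set xs \<alpha> jl \<inter> cball 0 R \<in> null_sets lebesgue"
proof -
  define E where "E = uncovered_set N xs r K \<inter> regular_set xs \<alpha> jl \<inter> cball 0 R"
  have "uncovered_set N xs r K \<in> sets lebesgue"
    using borel_closed[OF closed_uncovered_set[OF N]] by simp
  then have E_sets: "E \<in> sets lebesgue"
    unfolding E_def using sets_lebesgue_regular_set by (intro sets.Int) auto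
  have E: "E \<in> lmeasurable"
    using fmeasurableI2[OF lmeasurable_cball _ E_sets, of 0 R] unfolding E_def by blast
  define \<epsilon> where "\<epsilon> = min (1/2) (\<alpha>^2/64)"
  have \<epsilon>: "0 < \<epsilon>" "\<epsilon> < 1" "\<epsilon> \<le> \<alpha>^2/64" unfolding \<epsilon>_def using \<alpha> by auto
  have "measure lebesgue E = 0"
  proof (rule ccontr)
    assume "measure lebesgue E \<noteq> 0"
    then have "0 < measure lebesgue E" using measure_nonneg[of lebesgue E] by linarith
    then obtain j0 x0 where j0: "jl \<le> j0" "x0 \<in> E"
      and dense: "(1 - \<epsilon>) * (1/2) ^ (CARD('n) * j0) < measure lebesgue (E \<inter> cube_at (int j0) x0)"
      using exists_dense_cube_at_fine[OF E _ \<epsilon>(1,2)] by blast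
    moreover have "measure lebesgue (E \<inter> cube_at (int j0) x0) \<le> (1 - \<alpha>^2/64) * (1/2) ^ (CARD('n) * j0)"
      using j0 by (intro measure_uncovered_Int_cube_at_le[OF N r K \<alpha> E]) (auto simp: E_def)
    moreover have "(1 - \<alpha>^2/64) * (1/2::real) ^ (CARD('n) * j0) \<le> (1 - \<epsilon>) * (1/2) ^ (CARD('n) * j0)"
      using \<epsilon>(3) by (intro mult_right_mono) auto
    ultimately show False by linarith
  qed
  then show ?thesis
    using emeasure_eq_measure2[OF E] E_sets unfolding E_def by (intro null_setsI) auto
qed

lemma null_sets_uncovered_regular:
  fixes N :: "real^'n \<Rightarrow> real" and xs :: "nat \<Rightarrow> real^'n"
  assumes "is_norm N" "P_seq CARD('n) r" "1 \<le> K" "\<alpha> > 0"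
  shows "uncovered_set N xs r K \<inter> regular_set xs \<alpha> jl \<in> null_sets lebesgue"
proof -
  let ?X = "uncovered_set N xs r K \<inter> regular_set xs \<alpha> jl"
  have "x \<in> (\<Union>R::nat. ?X \<inter> cball 0 (real R))" if "x \<in> ?X" for x
    using that real_arch_simple[of "norm x"] by auto
  then have "?X = (\<Union>R::nat. ?X \<inter> cball 0 (real R))" by blast
  also have "\<dots> \<in> null_sets lebesgue"
    using null_sets_uncovered_regular_Int_cball[OF assms] by (intro null_sets_UN) blast
  finally show ?thesis .
qed

lemma frequently_close_if_regular:
  assumes x: "x \<in> regular_set xs \<alpha> jl" and \<alpha>: "\<alpha> > 0"
    and not_bad: "x \<notin> (\<Union>(K, p, j). uncovered_set N xs r (Suc K) \<inter> regular_set xs (1 / Suc p) j)"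
  shows "\<exists>\<^sub>F n in sequentially. N (x - xs n) < r n"
proof (rule ccontr)
  assume "\<not> (\<exists>\<^sub>F n in sequentially. N (x - xs n) < r n)"
  then obtain K where "\<forall>n\<ge>K. r n \<le> N (x - xs n)"
    by (auto simp: not_frequently not_less eventually_sequentially)
  then have "x \<in> uncovered_set N xs r (Suc K)" unfolding uncovered_set_def by simp
  moreover obtain p where "1 / Suc p < \<alpha>"
    using reals_Archimedean[OF \<alpha>] by (auto simp: inverse_eq_divide)
  then have "x \<in> regular_set xs (1 / Suc p) jl"
    using x regular_set_antimono[of "1 / Suc p" \<alpha>] by auto
  ultimately show False using not_bad by blast
qed

theorem theorem8p3:
  fixes N :: "real^'n \<Rightarrow> real" and xs :: "nat \<Rightarrow> real^'n" and U :: "(real^'n) set"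
  assumes "is_norm N"
    and "open U" and "U \<noteq> {}"
    and "AE x in lebesgue. x \<in> U \<longrightarrow>
           (\<exists>\<alpha>>0. \<exists>jl::nat. \<forall>j0 j::nat. jl \<le> j0 \<and> jl \<le> j \<longrightarrow>
              real (card (Mset xs (cube_at (int j0) x) j)) \<ge> \<alpha> * 2 ^ (CARD('n) * j))"
  shows "uniformly_eutaxic N xs U"
  unfolding uniformly_eutaxic_def
proof (intro allI impI)
  fix r assume r: "P_seq CARD('n) r"
  let ?Bad = "\<Union>(K, p, j). uncovered_set N xs r (Suc K) \<inter> regular_set xs (1 / Suc p) j"
  have "?Bad \<in> null_sets lebesgue"
    using null_sets_uncovered_regular[OF assms(1) r] by (intro null_sets_UN) auto
  then have "AE x in lebesgue. x \<notin> ?Bad" by (rule AE_not_in)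
  with assms(4) show "AE x in lebesgue. x \<in> U \<longrightarrow> (\<exists>\<^sub>F n in sequentially. N (x - xs n) < r n)"
  proof eventually_elim
    case (elim x)
    then show ?case
      using frequently_close_if_regular[of x xs _ _ N r] unfolding regular_set_def by blast
  qed
qed

end
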